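(* For any $\alpha>0$, integers $n>0$, $m>2$ with $m>n$, and $k$ with $n\le k\le m$, there exists a full rank matrix $X\in\mathbb{R}^{n\times m}$ such that for every subset $\mathcal S\subseteq[m]$ of cardinality $k$ with $\mathrm{rank}(X_{\mathcal S})=n$, $$\|X_{\mathcal S}^{\dagger}\|_2^2\ge\Big(\frac{m+\alpha^2}{k+\alpha^2}-1\Big)\|X^{\dagger}\|_2^2 .$$
   Context: $[m]=\{1,\dots,m\}$; $X_{\mathcal S}$ is the submatrix of columns of $X$ indexed by $\mathcal S$; $A^\dagger$ is the Moore–Penrose pseudo-inverse; $\|\cdot\|_2$ is the spectral norm. *)

theory Defs
  imports "Jordan_Normal_Form.DL_Rank_Submatrix"
begin

definition mat_rank :: "real mat \<Rightarrow> nat" where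
  "mat_rank A = vec_space.rank (dim_row A) A"

text \<open>Columns of X indexed by S (0-based column indices), all rows kept.\<close>
definition col_submatrix :: "real mat \<Rightarrow> nat set \<Rightarrow> real mat" where
  "col_submatrix X S = submatrix X UNIV S"

text \<open>The four Penrose conditions; the Moore-Penrose pseudo-inverse is the unique matrix satisfying them.\<close>
definition penrose :: "real mat \<Rightarrow> real mat \<Rightarrow> bool" where
  "penrose A B \<longleftrightarrow> B \<in> carrier_mat (dim_col A) (dim_row A) \<and>
     A * B * A = A \<and> B * A * B = B \<and>
     transpose_mat (A * B) = A * B \<and> transpose_mat (B * A) = B * A"

definition pinv :: "real mat \<Rightarrow> real mat" where
  "pinv A = (THE B. penrose A B)"

definition vnorm2 :: "real vec \<Rightarrow> real" where
  "vnorm2 v = sqrt (v \<bullet> v)"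

definition spec_norm :: "real mat \<Rightarrow> real" where
  "spec_norm A = Sup {vnorm2 (A *\<^sub>v x) | x. x \<in> carrier_vec (dim_col A) \<and> vnorm2 x \<le> 1}"

end

theory Submission
  imports Defs
begin

text \<open>
  Take for X the n x m matrix whose first n - 1 columns are (m - n + 1) e_i and whose remaining
  m - n + 1 columns all equal e_n. Its rows have disjoint supports, so X X^T is diagonal,
  X^+ = X^T (X X^T)^-1, and the squared spectral norm of X^+ is the reciprocal of the smallest squared
  row norm, here 1 / (m - n + 1). A column selection S of full rank must keep the first n - 1
  columns, since otherwise one of the first n - 1 rows of X_S vanishes; so the last row of X_S has
  squared norm k - n + 1 and the squared norm of its pseudo-inverse is at least 1 / (k - n + 1).
  The claim then reduces to (m - k)(k - n + 1) <= (m - n + 1)(k + alpha^2).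
\<close>

lemma (in vec_space) maximal_lin_indpt_cols_exists:
  obtains T where "maximal T (\<lambda>T. T \<subseteq> set (cols A) \<and> lin_indpt T)"
  using maximal_exists[of "\<lambda>T. T \<subseteq> set (cols A) \<and> lin_indpt T" "card (set (cols A))" "{}"]
  by (meson List.finite_set card_mono empty_iff empty_subsetI finite_lin_indpt2 rev_finite_subset)

lemma (in vec_space) rank_le_nr:
  assumes A: "A \<in> carrier_mat n nc"
  shows "rank A \<le> n"
proof -
  obtain T where T: "maximal T (\<lambda>T. T \<subseteq> set (cols A) \<and> lin_indpt T)"
    by (rule maximal_lin_indpt_cols_exists)
  have "T \<subseteq> set (cols A)" and li: "lin_indpt T" using T unfolding maximal_def by blast+
  then have "T \<subseteq> carrier_vec n" using cols_dim A by blast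
  then have "card T \<le> dim" using li_le_dim(2)[OF fin_dim _ li] by blast
  then show ?thesis using rank_card_indpt[OF A T] dim_is_n by simp
qed

lemma (in vec_space) full_row_rank_row_nonzero:
  assumes A: "A \<in> carrier_mat n nc" and r: "rank A = n" and i: "i < n"
  obtains l where "l < nc" "A $$ (i, l) \<noteq> 0"
proof (rule ccontr)
  assume "\<not> thesis"
  with that have zero_row: "\<And>l. l < nc \<Longrightarrow> A $$ (i, l) = 0" by blast
  obtain T where T: "maximal T (\<lambda>T. T \<subseteq> set (cols A) \<and> lin_indpt T)"
    by (rule maximal_lin_indpt_cols_exists)
  have TA: "T \<subseteq> set (cols A)" and li: "lin_indpt T" using T unfolding maximal_def by blast+
  have T_carrier: "T \<subseteq> carrier_vec n" using TA cols_dim A by blast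
  have "basis T"
    using dim_li_is_basis[OF fin_dim li_le_dim(1)[OF fin_dim T_carrier li] T_carrier li]
      rank_card_indpt[OF A T] r dim_is_n by simp
  then have "unit_vec n i \<in> span T" using i unfolding basis_def by simp
  then obtain a U where U: "unit_vec n i = lincomb a U" "finite U" "U \<subseteq> T"
    unfolding span_def by blast
  \<comment> \<open>Every column of A, hence every combination of them, vanishes in coordinate i.\<close>
  have "lincomb a U $ i = (\<Sum>x\<in>U. a x * x $ i)"
    using lincomb_index[OF i] U T_carrier by blast
  also have "\<dots> = 0"
  proof (rule sum.neutral, intro ballI)
    fix x assume "x \<in> U"
    then have "x \<in> set (cols A)" using U(3) TA by blast
    then obtain l where "l < nc" "x = col A l"
      using A by (metis cols_length cols_nth carrier_matD(2) in_set_conv_nth)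
    then show "a x * x $ i = 0" using zero_row A i by simp
  qed
  finally show False using U(1) i by (metis index_unit_vec(1) zero_neq_one)
qed

lemma full_row_rank_row_sq_norm_pos:
  fixes A :: "real mat"
  assumes A: "A \<in> carrier_mat n nc" and r: "vec_space.rank n A = n" and i: "i < n"
  shows "0 < (\<Sum>l<nc. (A $$ (i, l))\<^sup>2)"
proof -
  obtain l where l: "l < nc" "A $$ (i, l) \<noteq> 0" by (rule vec_space.full_row_rank_row_nonzero[OF A r i])
  then have "0 < (A $$ (i, l))\<^sup>2" by simp
  also have "\<dots> \<le> (\<Sum>l<nc. (A $$ (i, l))\<^sup>2)" using l by (intro member_le_sum) auto
  finally show ?thesis .
qed

lemma penrose_mult_left_unique:
  assumes B: "penrose A B" and C: "penrose A C"
  shows "A * B = A * C"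
proof -
  define r c where "r = dim_row A" and "c = dim_col A"
  have A: "A \<in> carrier_mat r c" unfolding r_def c_def by auto
  have Bc: "B \<in> carrier_mat c r" and Cc: "C \<in> carrier_mat c r"
    using B C unfolding penrose_def r_def c_def by auto
  have ACc: "A * C \<in> carrier_mat r r" using A Cc by simp
  have "A * B = B\<^sup>T * A\<^sup>T"
    using B transpose_mult[OF A Bc] unfolding penrose_def by metis
  also have "A\<^sup>T = (A * C * A)\<^sup>T" using C unfolding penrose_def by simp
  also have "\<dots> = A\<^sup>T * (A * C)" using transpose_mult[OF ACc A] C unfolding penrose_def by simp
  also have "B\<^sup>T * (A\<^sup>T * (A * C)) = (B\<^sup>T * A\<^sup>T) * (A * C)"
    using A Bc ACc by (intro assoc_mult_mat[symmetric]) auto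
  also have "B\<^sup>T * A\<^sup>T = A * B"
    using B transpose_mult[OF A Bc] unfolding penrose_def by metis
  also have "A * B * (A * C) = A * B * A * C"
    using A Bc Cc by (intro assoc_mult_mat[symmetric]) auto
  also have "\<dots> = A * C" using B unfolding penrose_def by simp
  finally show ?thesis .
qed

lemma penrose_mult_right_unique:
  assumes B: "penrose A B" and C: "penrose A C"
  shows "B * A = C * A"
proof -
  define r c where "r = dim_row A" and "c = dim_col A"
  have A: "A \<in> carrier_mat r c" unfolding r_def c_def by auto
  have Bc: "B \<in> carrier_mat c r" and Cc: "C \<in> carrier_mat c r"
    using B C unfolding penrose_def r_def c_def by auto
  have CAc: "C * A \<in> carrier_mat c c" using A Cc by simp
  have "B * A = A\<^sup>T * B\<^sup>T"
    using B transpose_mult[OF Bc A] unfolding penrose_def by metis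
  also have "A\<^sup>T = (A * (C * A))\<^sup>T" using C assoc_mult_mat[OF A Cc A] unfolding penrose_def by simp
  also have "\<dots> = C * A * A\<^sup>T" using transpose_mult[OF A CAc] C unfolding penrose_def by simp
  also have "C * A * A\<^sup>T * B\<^sup>T = (C * A) * (A\<^sup>T * B\<^sup>T)"
    using A Bc CAc by (intro assoc_mult_mat) auto
  also have "A\<^sup>T * B\<^sup>T = B * A"
    using B transpose_mult[OF Bc A] unfolding penrose_def by metis
  also have "C * A * (B * A) = C * (A * B * A)"
    using A Bc Cc by (metis assoc_mult_mat mult_carrier_mat)
  also have "\<dots> = C * A" using B unfolding penrose_def by simp
  finally show ?thesis .
qed

lemma penrose_unique:
  assumes B: "penrose A B" and C: "penrose A C"
  shows "B = C"
proof -
  have A: "A \<in> carrier_mat (dim_row A) (dim_col A)" by auto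
  have Bc: "B \<in> carrier_mat (dim_col A) (dim_row A)" and Cc: "C \<in> carrier_mat (dim_col A) (dim_row A)"
    using B C unfolding penrose_def by auto
  have "B = B * A * B" using B unfolding penrose_def by simp
  also have "\<dots> = B * A * C"
    using penrose_mult_left_unique[OF B C] A Bc Cc by (metis assoc_mult_mat)
  also have "\<dots> = C * A * C" using penrose_mult_right_unique[OF B C] by simp
  also have "\<dots> = C" using C unfolding penrose_def by simp
  finally show ?thesis .
qed

lemma pinv_eqI: "penrose A B \<Longrightarrow> pinv A = B"
  unfolding pinv_def using penrose_unique by blast

lemma pinv_gram_right_inverse:
  fixes A E :: "real mat"
  assumes A: "A \<in> carrier_mat r c" and E: "E \<in> carrier_mat r r"
    and inv: "A * A\<^sup>T * E = 1\<^sub>m r" and sym: "E\<^sup>T = E"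
  shows "pinv A = A\<^sup>T * E"
proof (rule pinv_eqI)
  have At: "A\<^sup>T \<in> carrier_mat c r" using A by simp
  have AtE: "A\<^sup>T * E \<in> carrier_mat c r" using At E by simp
  have right_inv: "A * (A\<^sup>T * E) = 1\<^sub>m r" using inv assoc_mult_mat[OF A At E] by simp
  have "A\<^sup>T * E * A * (A\<^sup>T * E) = A\<^sup>T * E * (A * (A\<^sup>T * E))"
    using assoc_mult_mat[OF AtE A AtE] .
  also have "\<dots> = A\<^sup>T * E" using right_inv right_mult_one_mat[OF AtE] by simp
  finally have reflexive: "A\<^sup>T * E * A * (A\<^sup>T * E) = A\<^sup>T * E" .
  have "(A\<^sup>T * E * A)\<^sup>T = A\<^sup>T * (E\<^sup>T * A)"
    using transpose_mult[OF AtE A] transpose_mult[OF At E] by simp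
  also have "\<dots> = A\<^sup>T * E * A" using sym assoc_mult_mat[OF At E A] by simp
  finally have symmetric: "(A\<^sup>T * E * A)\<^sup>T = A\<^sup>T * E * A" .
  show "penrose A (A\<^sup>T * E)"
    unfolding penrose_def using right_inv reflexive symmetric AtE A by simp
qed

lemma pinv_gram_right_inverse_sq_norm:
  fixes A E :: "real mat"
  assumes A: "A \<in> carrier_mat r c" and E: "E \<in> carrier_mat r r"
    and inv: "A * A\<^sup>T * E = 1\<^sub>m r" and sym: "E\<^sup>T = E" and x: "x \<in> carrier_vec r"
  shows "(pinv A *\<^sub>v x) \<bullet> (pinv A *\<^sub>v x) = (E *\<^sub>v x) \<bullet> x"
proof -
  have At: "A\<^sup>T \<in> carrier_mat c r" using A by simp
  define y where "y = E *\<^sub>v x"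
  have y: "y \<in> carrier_vec r" using E x y_def by simp
  have z: "A\<^sup>T *\<^sub>v y \<in> carrier_vec c" using At y by simp
  have pinv_x: "pinv A *\<^sub>v x = A\<^sup>T *\<^sub>v y"
    unfolding pinv_gram_right_inverse[OF A E inv sym] y_def using At E x by simp
  have "A *\<^sub>v (A\<^sup>T *\<^sub>v y) = (A * (A\<^sup>T * E)) *\<^sub>v x"
    using assoc_mult_mat_vec[OF A _ x, of "A\<^sup>T * E"] assoc_mult_mat_vec[OF At E x] At E y_def by simp
  also have "\<dots> = x" using inv assoc_mult_mat[OF A At E] x by simp
  finally have "A *\<^sub>v (A\<^sup>T *\<^sub>v y) = x" .
  then show ?thesis
    unfolding pinv_x using transpose_vec_mult_scalar[OF A z y] comm_scalar_prod[OF y x] y_def by simp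
qed

lemma transpose_mat_diag [simp]: "(mat_diag n f)\<^sup>T = mat_diag n f"
  unfolding mat_diag_def by (rule eq_matI) auto

lemma mat_diag_mult_inverse:
  assumes "\<And>i. i < n \<Longrightarrow> f i \<noteq> (0 :: 'a :: field)"
  shows "mat_diag n f * mat_diag n (\<lambda>i. 1 / f i) = 1\<^sub>m n"
  using assms unfolding mat_diag_diag by (intro eq_matI) (auto simp: mat_diag_def)

lemma mat_diag_mult_vec:
  assumes "x \<in> carrier_vec n"
  shows "mat_diag n f *\<^sub>v x = vec n (\<lambda>i. f i * x $ i)"
proof (rule eq_vecI)
  fix i assume "i < dim_vec (vec n (\<lambda>i. f i * x $ i))"
  then have i: "i < n" by simp
  have "(mat_diag n f *\<^sub>v x) $ i = (\<Sum>j\<in>{0..<n}. (if i = j then f j else 0) * x $ j)"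
    using i assms by (simp add: mat_diag_def scalar_prod_def)
  also have "\<dots> = (\<Sum>j\<in>{0..<n}. if i = j then f j * x $ j else 0)"
    by (rule sum.cong) auto
  finally show "(mat_diag n f *\<^sub>v x) $ i = vec n (\<lambda>i. f i * x $ i) $ i"
    using i by simp
qed (use assms in \<open>simp add: mat_diag_def\<close>)

lemma scalar_prod_self_eq_sum_squares:
  "(x :: 'a :: comm_semiring_1 vec) \<in> carrier_vec n \<Longrightarrow> x \<bullet> x = (\<Sum>i<n. (x $ i)\<^sup>2)"
  by (simp add: scalar_prod_def atLeast0LessThan power2_eq_square)

lemma mat_diag_quadratic_form:
  "(x :: 'a :: comm_semiring_1 vec) \<in> carrier_vec n \<Longrightarrow>
    (mat_diag n f *\<^sub>v x) \<bullet> x = (\<Sum>i<n. f i * (x $ i)\<^sup>2)"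
  by (simp add: mat_diag_mult_vec scalar_prod_def atLeast0LessThan power2_eq_square mult.assoc)

lemma mult_transpose_disjoint_rows:
  fixes A :: "'a :: comm_semiring_1 mat"
  assumes A: "A \<in> carrier_mat r c"
    and disjoint: "\<And>i j l. i < r \<Longrightarrow> j < r \<Longrightarrow> i \<noteq> j \<Longrightarrow> l < c \<Longrightarrow> A $$ (i, l) * A $$ (j, l) = 0"
  shows "A * A\<^sup>T = mat_diag r (\<lambda>i. \<Sum>l<c. (A $$ (i, l))\<^sup>2)"
proof (rule eq_matI)
  fix i j assume "i < dim_row (mat_diag r (\<lambda>i. \<Sum>l<c. (A $$ (i, l))\<^sup>2))"
    and "j < dim_col (mat_diag r (\<lambda>i. \<Sum>l<c. (A $$ (i, l))\<^sup>2))"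
  then have i: "i < r" and j: "j < r" by (auto simp: mat_diag_def)
  have "(A * A\<^sup>T) $$ (i, j) = (\<Sum>l<c. A $$ (i, l) * A $$ (j, l))"
    using i j A by (simp add: scalar_prod_def atLeast0LessThan)
  also have "\<dots> = (if i = j then (\<Sum>l<c. (A $$ (i, l))\<^sup>2) else 0)"
    using disjoint i j by (auto simp: power2_eq_square intro!: sum.neutral)
  finally show "(A * A\<^sup>T) $$ (i, j) = mat_diag r (\<lambda>i. \<Sum>l<c. (A $$ (i, l))\<^sup>2) $$ (i, j)"
    using i j by (simp add: mat_diag_def)
qed (use A in \<open>auto simp: mat_diag_def\<close>)

lemma det_mat_diag: "det (mat_diag n f) = (\<Prod>i<n. f i :: 'a :: comm_ring_1)"
proof -
  have "upper_triangular (mat_diag n f)" by (auto simp: upper_triangular_def mat_diag_def)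
  then have "det (mat_diag n f) = prod_list (diag_mat (mat_diag n f))"
    by (rule det_upper_triangular[OF _ mat_diag_dim])
  also have "\<dots> = (\<Prod>i<n. f i)" by (simp add: prod_list_diag_prod mat_diag_def atLeast0LessThan)
  finally show ?thesis .
qed

lemma mat_diag_gram_right_inverse:
  assumes gram: "A * A\<^sup>T = mat_diag r d" and pos: "\<And>i. i < r \<Longrightarrow> 0 < (d i :: real)"
  shows "A * A\<^sup>T * mat_diag r (\<lambda>i. 1 / d i) = 1\<^sub>m r"
  unfolding gram by (rule mat_diag_mult_inverse) (use pos in fastforce)

lemma pinv_diagonal_gram:
  fixes A :: "real mat"
  assumes A: "A \<in> carrier_mat r c" and gram: "A * A\<^sup>T = mat_diag r d"
    and pos: "\<And>i. i < r \<Longrightarrow> 0 < d i"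
  shows "pinv A = A\<^sup>T * mat_diag r (\<lambda>i. 1 / d i)"
  by (rule pinv_gram_right_inverse[OF A mat_diag_dim mat_diag_gram_right_inverse[OF gram pos]
        transpose_mat_diag])

lemma pinv_diagonal_gram_sq_norm:
  fixes A :: "real mat"
  assumes A: "A \<in> carrier_mat r c" and gram: "A * A\<^sup>T = mat_diag r d"
    and pos: "\<And>i. i < r \<Longrightarrow> 0 < d i" and x: "x \<in> carrier_vec r"
  shows "(pinv A *\<^sub>v x) \<bullet> (pinv A *\<^sub>v x) = (\<Sum>i<r. (x $ i)\<^sup>2 / d i)"
  using pinv_gram_right_inverse_sq_norm[OF A mat_diag_dim mat_diag_gram_right_inverse[OF gram pos]
      transpose_mat_diag x] mat_diag_quadratic_form[OF x] by simp

lemma vnorm2_sq: "(vnorm2 x)\<^sup>2 = x \<bullet> x"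
  and vnorm2_nonneg: "0 \<le> vnorm2 x"
proof -
  have "0 \<le> x \<bullet> x"
    using scalar_prod_self_eq_sum_squares[of x "dim_vec x"] by (simp add: sum_nonneg)
  then show "(vnorm2 x)\<^sup>2 = x \<bullet> x" "0 \<le> vnorm2 x" unfolding vnorm2_def by simp_all
qed

lemma vnorm2_le_1_iff: "vnorm2 x \<le> 1 \<longleftrightarrow> x \<bullet> x \<le> 1"
  unfolding vnorm2_def by simp

lemma spec_norm_sq_le:
  fixes B :: "real mat"
  assumes B: "B \<in> carrier_mat c r" and K: "0 \<le> K"
    and bound: "\<And>x. x \<in> carrier_vec r \<Longrightarrow> (B *\<^sub>v x) \<bullet> (B *\<^sub>v x) \<le> K * (x \<bullet> x)"
  shows "(spec_norm B)\<^sup>2 \<le> K"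
proof -
  let ?N = "{vnorm2 (B *\<^sub>v x) | x. x \<in> carrier_vec (dim_col B) \<and> vnorm2 x \<le> 1}"
  have N_le: "v \<le> sqrt K" if "v \<in> ?N" for v
  proof -
    from that B obtain x where x: "x \<in> carrier_vec r" "x \<bullet> x \<le> 1" "v = vnorm2 (B *\<^sub>v x)"
      by (auto simp: vnorm2_le_1_iff)
    have "v\<^sup>2 \<le> K * (x \<bullet> x)" using bound[OF x(1)] x(3) vnorm2_sq by simp
    also have "\<dots> \<le> K" using x(2) K by (simp add: mult_left_le)
    finally show ?thesis by (simp add: real_le_rsqrt)
  qed
  have "0\<^sub>v r \<in> carrier_vec (dim_col B) \<and> vnorm2 (0\<^sub>v r) \<le> 1" using B by (simp add: vnorm2_def)
  then have zero: "vnorm2 (B *\<^sub>v 0\<^sub>v r) \<in> ?N" by blast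
  have "0 \<le> spec_norm B"
    unfolding spec_norm_def by (rule cSup_upper2[OF zero vnorm2_nonneg]) (use N_le in \<open>rule bdd_aboveI\<close>)
  moreover have "spec_norm B \<le> sqrt K"
    unfolding spec_norm_def using zero N_le by (intro cSup_least) auto
  ultimately have "(spec_norm B)\<^sup>2 \<le> (sqrt K)\<^sup>2" by (rule power_mono[rotated])
  then show ?thesis using K by simp
qed

lemma spec_norm_sq_ge:
  fixes B :: "real mat"
  assumes B: "B \<in> carrier_mat c r"
    and bounded: "\<And>x. x \<in> carrier_vec r \<Longrightarrow> x \<bullet> x \<le> 1 \<Longrightarrow> (B *\<^sub>v x) \<bullet> (B *\<^sub>v x) \<le> M"
    and x: "x \<in> carrier_vec r" "x \<bullet> x \<le> 1"
  shows "(B *\<^sub>v x) \<bullet> (B *\<^sub>v x) \<le> (spec_norm B)\<^sup>2"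
proof -
  let ?N = "{vnorm2 (B *\<^sub>v x) | x. x \<in> carrier_vec (dim_col B) \<and> vnorm2 x \<le> 1}"
  have "bdd_above ?N"
  proof (rule bdd_aboveI)
    fix v assume "v \<in> ?N"
    with B obtain y where y: "y \<in> carrier_vec r" "y \<bullet> y \<le> 1" "v = vnorm2 (B *\<^sub>v y)"
      by (auto simp: vnorm2_le_1_iff)
    then have "v\<^sup>2 \<le> M" using bounded vnorm2_sq by simp
    then show "v \<le> sqrt M" by (simp add: real_le_rsqrt)
  qed
  moreover have "vnorm2 (B *\<^sub>v x) \<in> ?N" using B x by (auto simp: vnorm2_le_1_iff)
  ultimately have "vnorm2 (B *\<^sub>v x) \<le> spec_norm B" unfolding spec_norm_def by (blast intro: cSup_upper)
  then have "(vnorm2 (B *\<^sub>v x))\<^sup>2 \<le> (spec_norm B)\<^sup>2"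
    using vnorm2_nonneg by (rule power_mono)
  then show ?thesis by (simp add: vnorm2_sq)
qed

lemma spec_norm_pinv_diagonal_gram_le:
  fixes A :: "real mat"
  assumes A: "A \<in> carrier_mat r c" and gram: "A * A\<^sup>T = mat_diag r d"
    and b: "0 < b" and d_ge: "\<And>i. i < r \<Longrightarrow> b \<le> d i"
  shows "(spec_norm (pinv A))\<^sup>2 \<le> 1 / b"
proof (rule spec_norm_sq_le)
  have pos: "\<And>i. i < r \<Longrightarrow> 0 < d i" using b d_ge less_le_trans by blast
  show "pinv A \<in> carrier_mat c r" using pinv_diagonal_gram[OF A gram pos] A by simp
  show "0 \<le> 1 / b" using b by simp
  fix x :: "real vec" assume x: "x \<in> carrier_vec r"
  have "(pinv A *\<^sub>v x) \<bullet> (pinv A *\<^sub>v x) = (\<Sum>i<r. (x $ i)\<^sup>2 / d i)"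
    by (rule pinv_diagonal_gram_sq_norm[OF A gram pos x])
  also have "\<dots> \<le> (\<Sum>i<r. (x $ i)\<^sup>2 / b)"
    using b d_ge pos by (intro sum_mono divide_left_mono) (auto intro: mult_pos_pos)
  also have "\<dots> = 1 / b * (x \<bullet> x)"
    by (simp add: scalar_prod_self_eq_sum_squares[OF x] sum_divide_distrib)
  finally show "(pinv A *\<^sub>v x) \<bullet> (pinv A *\<^sub>v x) \<le> 1 / b * (x \<bullet> x)" .
qed

lemma spec_norm_pinv_diagonal_gram_ge:
  fixes A :: "real mat"
  assumes A: "A \<in> carrier_mat r c" and gram: "A * A\<^sup>T = mat_diag r d"
    and pos: "\<And>i. i < r \<Longrightarrow> 0 < d i" and i: "i < r"
  shows "1 / d i \<le> (spec_norm (pinv A))\<^sup>2"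
proof -
  have sq_norm: "(pinv A *\<^sub>v x) \<bullet> (pinv A *\<^sub>v x) = (\<Sum>j<r. (x $ j)\<^sup>2 / d j)"
    if "x \<in> carrier_vec r" for x
    by (rule pinv_diagonal_gram_sq_norm[OF A gram pos that])
  have "(pinv A *\<^sub>v unit_vec r i) \<bullet> (pinv A *\<^sub>v unit_vec r i) \<le> (spec_norm (pinv A))\<^sup>2"
  proof (rule spec_norm_sq_ge)
    show "pinv A \<in> carrier_mat c r" using pinv_diagonal_gram[OF A gram pos] A by simp
    fix x :: "real vec" assume x: "x \<in> carrier_vec r" and "x \<bullet> x \<le> 1"
    then have "(x $ j)\<^sup>2 \<le> 1" if "j < r" for j
      using member_le_sum[of j "{..<r}" "\<lambda>j. (x $ j)\<^sup>2"] that
      by (simp add: scalar_prod_self_eq_sum_squares[OF x])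
    then show "(pinv A *\<^sub>v x) \<bullet> (pinv A *\<^sub>v x) \<le> (\<Sum>j<r. 1 / d j)"
      unfolding sq_norm[OF x] using pos by (intro sum_mono divide_right_mono) (auto intro: less_imp_le)
  qed (use i in simp_all)
  moreover have "(\<Sum>j<r. (unit_vec r i $ j)\<^sup>2 / d j) = (\<Sum>j<r. if j = i then 1 / d j else 0)"
    by (rule sum.cong) (auto simp: unit_vec_def)
  ultimately show ?thesis using i by (simp add: sq_norm)
qed

lemma col_submatrix_carrier:
  "S \<subseteq> {..<dim_col X} \<Longrightarrow> col_submatrix X S \<in> carrier_mat (dim_row X) (card S)"
  unfolding col_submatrix_def
  by (auto simp: dim_submatrix intro!: carrier_matI arg_cong[where f = card])

lemma col_submatrix_index:
  assumes S: "S \<subseteq> {..<dim_col X}" and i: "i < dim_row X" and l: "l < card S"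
  shows "col_submatrix X S $$ (i, l) = X $$ (i, pick S l)"
proof -
  have "{i. i < dim_row X \<and> i \<in> UNIV} = {..<dim_row X}" "{j. j < dim_col X \<and> j \<in> S} = S"
    using S by auto
  then show ?thesis
    unfolding col_submatrix_def using i l by (simp add: submatrix_index pick_UNIV)
qed

lemma sum_pick:
  assumes "finite S"
  shows "(\<Sum>l<card S. f (pick S l)) = (\<Sum>j\<in>S. f j)"
proof (rule sum.reindex_bij_betw)
  have "inj_on (pick S) {..<card S}"
    by (rule strict_mono_on_imp_inj_on) (auto simp: strict_mono_on_def pick_mono_le)
  moreover have "pick S ` {..<card S} = S"
    using calculation assms by (intro card_subset_eq) (auto simp: pick_in_set_le card_image)
  ultimately show "bij_betw (pick S) {..<card S} S" by (simp add: bij_betw_def)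
qed

definition lower_bound_witness :: "nat \<Rightarrow> nat \<Rightarrow> real mat" where
  "lower_bound_witness n m = mat n m (\<lambda>(i, j).
     if j < n - 1 then (if i = j then real (m - n + 1) else 0) else if i = n - 1 then 1 else 0)"

lemma lower_bound_witness_carrier [simp]: "lower_bound_witness n m \<in> carrier_mat n m"
  unfolding lower_bound_witness_def by simp

lemma dim_lower_bound_witness [simp]:
  "dim_row (lower_bound_witness n m) = n" "dim_col (lower_bound_witness n m) = m"
  unfolding lower_bound_witness_def by simp_all

lemma lower_bound_witness_index:
  "i < n \<Longrightarrow> j < m \<Longrightarrow> lower_bound_witness n m $$ (i, j) =
     (if j < n - 1 then (if i = j then real (m - n + 1) else 0) else if i = n - 1 then 1 else 0)"
  unfolding lower_bound_witness_def by simp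

lemma lower_bound_witness_disjoint_rows:
  "i < n \<Longrightarrow> j < n \<Longrightarrow> i \<noteq> j \<Longrightarrow> l < m \<Longrightarrow>
    lower_bound_witness n m $$ (i, l) * lower_bound_witness n m $$ (j, l) = 0"
  by (simp add: lower_bound_witness_index)

lemma lower_bound_witness_rank:
  assumes "0 < n" "n \<le> m"
  shows "mat_rank (lower_bound_witness n m) = n"
proof -
  let ?X = "lower_bound_witness n m"
  have rows: "{i. i < dim_row ?X \<and> i \<in> UNIV} = {..<n}"
    and cols: "{j. j < dim_col ?X \<and> j \<in> {..<n}} = {..<n}"
    using assms by auto
  have pick: "pick {..<n} j = j" if "j < n" for j
  proof -
    have "{a \<in> {..<n}. a < j} = {..<j}" using that by auto
    then show ?thesis using pick_card_in_set[of j "{..<n}"] that by simp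
  qed
  have "submatrix ?X UNIV {..<n} = mat_diag n (\<lambda>i. if i < n - 1 then real (m - n + 1) else 1)"
  proof (rule eq_matI)
    fix i j assume "i < dim_row (mat_diag n (\<lambda>i. if i < n - 1 then real (m - n + 1) else 1))"
      and "j < dim_col (mat_diag n (\<lambda>i. if i < n - 1 then real (m - n + 1) else 1))"
    then have i: "i < n" and j: "j < n" by (simp_all add: mat_diag_def)
    have "submatrix ?X UNIV {..<n} $$ (i, j) = ?X $$ (pick UNIV i, pick {..<n} j)"
      by (rule submatrix_index; unfold rows cols) (use i j in simp_all)
    then have "submatrix ?X UNIV {..<n} $$ (i, j) = ?X $$ (i, j)" by (simp add: pick_UNIV pick[OF j])
    then show "submatrix ?X UNIV {..<n} $$ (i, j)
        = mat_diag n (\<lambda>i. if i < n - 1 then real (m - n + 1) else 1) $$ (i, j)"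
      using i j assms by (auto simp: lower_bound_witness_index mat_diag_def)
  qed (unfold dim_submatrix rows cols, simp_all add: mat_diag_def)
  then have "det (submatrix ?X UNIV {..<n}) \<noteq> 0" by (simp add: det_mat_diag)
  then have "card {j. j < m \<and> j \<in> {..<n}} \<le> vec_space.rank n ?X"
    by (rule vec_space.rank_gt_minor[OF lower_bound_witness_carrier])
  moreover have "{j. j < m \<and> j \<in> {..<n}} = {..<n}" using assms by auto
  ultimately show ?thesis
    using vec_space.rank_le_nr[OF lower_bound_witness_carrier] unfolding mat_rank_def
    by (simp add: le_antisym)
qed

lemma lower_bound_witness_gram:
  "lower_bound_witness n m * (lower_bound_witness n m)\<^sup>T =
     mat_diag n (\<lambda>i. \<Sum>l<m. (lower_bound_witness n m $$ (i, l))\<^sup>2)"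
  by (rule mult_transpose_disjoint_rows[OF lower_bound_witness_carrier lower_bound_witness_disjoint_rows])

lemma lower_bound_witness_row_sq_norm_ge:
  assumes "n \<le> m" "i < n"
  shows "real (m - n + 1) \<le> (\<Sum>l<m. (lower_bound_witness n m $$ (i, l))\<^sup>2)"
proof (cases "i < n - 1")
  case True
  have "real (m - n + 1) \<le> (lower_bound_witness n m $$ (i, i))\<^sup>2"
    using True assms by (simp add: lower_bound_witness_index power2_eq_square mult_le_cancel_left1)
  also have "\<dots> \<le> (\<Sum>l<m. (lower_bound_witness n m $$ (i, l))\<^sup>2)"
    using True assms by (intro member_le_sum) auto
  finally show ?thesis .
next
  case False
  then have i: "i = n - 1" using assms by simp
  have "(\<Sum>l\<in>{n - 1..<m}. (lower_bound_witness n m $$ (i, l))\<^sup>2) = (\<Sum>l\<in>{n - 1..<m}. 1)"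
    using assms by (intro sum.cong) (auto simp: lower_bound_witness_index i)
  also have "\<dots> = real (m - n + 1)" using assms by simp
  finally have "real (m - n + 1) = (\<Sum>l\<in>{n - 1..<m}. (lower_bound_witness n m $$ (i, l))\<^sup>2)" ..
  also have "\<dots> \<le> (\<Sum>l<m. (lower_bound_witness n m $$ (i, l))\<^sup>2)" by (intro sum_mono2) auto
  finally show ?thesis .
qed

lemma spec_norm_pinv_lower_bound_witness_le:
  assumes "n \<le> m"
  shows "(spec_norm (pinv (lower_bound_witness n m)))\<^sup>2 \<le> 1 / real (m - n + 1)"
  by (rule spec_norm_pinv_diagonal_gram_le[OF lower_bound_witness_carrier lower_bound_witness_gram])
    (use lower_bound_witness_row_sq_norm_ge assms in auto)

lemma lower_bound_witness_full_rank_selection: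
  assumes S: "S \<subseteq> {..<m}" and r: "mat_rank (col_submatrix (lower_bound_witness n m) S) = n"
  shows "{..<n - 1} \<subseteq> S"
proof
  let ?X = "lower_bound_witness n m"
  fix i assume i: "i \<in> {..<n - 1}"
  have A: "col_submatrix ?X S \<in> carrier_mat n (card S)" using col_submatrix_carrier[of S ?X] S by simp
  with r have rank: "vec_space.rank n (col_submatrix ?X S) = n" unfolding mat_rank_def by simp
  from i have "i < n" by simp
  then obtain l where l: "l < card S" "col_submatrix ?X S $$ (i, l) \<noteq> 0"
    by (rule vec_space.full_row_rank_row_nonzero[OF A rank])
  have "pick S l \<in> S" using l(1) by (rule pick_in_set_le)
  moreover have "?X $$ (i, pick S l) \<noteq> 0" using l S i by (simp add: col_submatrix_index)
  then have "pick S l = i"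
    using i S \<open>pick S l \<in> S\<close> by (auto simp: lower_bound_witness_index split: if_splits)
  ultimately show "i \<in> S" by simp
qed

lemma lower_bound_witness_selection_last_row:
  assumes S: "S \<subseteq> {..<m}" and sel: "{..<n - 1} \<subseteq> S" and n: "0 < n"
  shows "(\<Sum>l<card S. (col_submatrix (lower_bound_witness n m) S $$ (n - 1, l))\<^sup>2) = real (card S + 1 - n)"
proof -
  let ?X = "lower_bound_witness n m"
  have fin: "finite S" using S finite_subset by blast
  have "(\<Sum>l<card S. (col_submatrix ?X S $$ (n - 1, l))\<^sup>2) = (\<Sum>l<card S. (?X $$ (n - 1, pick S l))\<^sup>2)"
    using S n by (intro sum.cong) (auto simp: col_submatrix_index)
  also have "\<dots> = (\<Sum>j\<in>S. (?X $$ (n - 1, j))\<^sup>2)" by (rule sum_pick[OF fin])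
  also have "\<dots> = (\<Sum>j\<in>S. if \<not> j < n - 1 then 1 else 0)"
    using S n by (intro sum.cong) (auto simp: lower_bound_witness_index)
  also have "\<dots> = real (card {j \<in> S. \<not> j < n - 1})" by (simp add: sum.inter_filter[OF fin, symmetric])
  also have "{j \<in> S. \<not> j < n - 1} = S - {..<n - 1}" by auto
  also have "card (S - {..<n - 1}) = card S + 1 - n" using card_Diff_subset[OF _ sel] n by simp
  finally show ?thesis .
qed

lemma spec_norm_pinv_lower_bound_witness_selection_ge:
  assumes S: "S \<subseteq> {..<m}" and r: "mat_rank (col_submatrix (lower_bound_witness n m) S) = n"
    and n: "0 < n"
  shows "1 / real (card S + 1 - n) \<le> (spec_norm (pinv (col_submatrix (lower_bound_witness n m) S)))\<^sup>2"
proof -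
  let ?X = "lower_bound_witness n m"
  let ?A = "col_submatrix ?X S"
  have A: "?A \<in> carrier_mat n (card S)" using col_submatrix_carrier[of S ?X] S by simp
  with r have rank: "vec_space.rank n ?A = n" unfolding mat_rank_def by simp
  have "?A $$ (i, l) * ?A $$ (j, l) = 0" if "i < n" "j < n" "i \<noteq> j" "l < card S" for i j l
    using lower_bound_witness_disjoint_rows[OF that(1-3), of "pick S l" m] that S pick_in_set_le[OF that(4)]
    by (auto simp: col_submatrix_index)
  then have gram: "?A * ?A\<^sup>T = mat_diag n (\<lambda>i. \<Sum>l<card S. (?A $$ (i, l))\<^sup>2)"
    by (rule mult_transpose_disjoint_rows[OF A])
  have "1 / (\<Sum>l<card S. (?A $$ (n - 1, l))\<^sup>2) \<le> (spec_norm (pinv ?A))\<^sup>2"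
    by (rule spec_norm_pinv_diagonal_gram_ge[OF A gram]) (use full_row_rank_row_sq_norm_pos[OF A rank] n in auto)
  then show ?thesis
    using lower_bound_witness_selection_last_row[OF S lower_bound_witness_full_rank_selection[OF S r] n]
    by simp
qed

lemma selection_factor_bound:
  fixes \<alpha> t :: real
  assumes "0 < n" "n \<le> k" "k \<le> m" and t: "t \<le> 1 / real (m - n + 1)"
  shows "((real m + \<alpha>\<^sup>2) / (real k + \<alpha>\<^sup>2) - 1) * t \<le> 1 / real (k + 1 - n)"
proof -
  have k: "0 < real k + \<alpha>\<^sup>2" using assms by (simp add: add_pos_nonneg)
  have "real (k + 1 - n) \<le> real k" using assms by simp
  then have "real (k + 1 - n) \<le> real k + \<alpha>\<^sup>2" by (simp add: add_increasing2)
  then have "(real m - real k) * real (k + 1 - n) \<le> real (m - n + 1) * (real k + \<alpha>\<^sup>2)"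
    using assms by (intro mult_mono) auto
  then have bound: "(real m - real k) / ((real k + \<alpha>\<^sup>2) * real (m - n + 1)) \<le> 1 / real (k + 1 - n)"
    using assms k by (simp add: divide_simps mult.commute)
  have "((real m + \<alpha>\<^sup>2) / (real k + \<alpha>\<^sup>2) - 1) * t = (real m - real k) / (real k + \<alpha>\<^sup>2) * t"
    using k by (simp add: field_simps)
  also have "\<dots> \<le> (real m - real k) / (real k + \<alpha>\<^sup>2) * (1 / real (m - n + 1))"
    using assms k by (intro mult_left_mono[OF t]) simp
  also have "\<dots> \<le> 1 / real (k + 1 - n)" using bound by simp
  finally show ?thesis .
qed

theorem theorem4p3:
  fixes \<alpha> :: real and n m k :: nat
  assumes "\<alpha> > 0" and "n > 0" and "m > 2" and "m > n" and "n \<le> k" and "k \<le> m"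
  shows "\<exists>X \<in> carrier_mat n m. mat_rank X = n \<and>
           (\<forall>S. S \<subseteq> {..<m} \<and> card S = k \<and> mat_rank (col_submatrix X S) = n \<longrightarrow>
              (spec_norm (pinv (col_submatrix X S)))\<^sup>2 \<ge>
                ((real m + \<alpha>\<^sup>2) / (real k + \<alpha>\<^sup>2) - 1) * (spec_norm (pinv X))\<^sup>2)"
proof (intro bexI conjI allI impI)
  let ?X = "lower_bound_witness n m"
  show "?X \<in> carrier_mat n m" by simp
  show "mat_rank ?X = n" using assms by (simp add: lower_bound_witness_rank)
  fix S assume S: "S \<subseteq> {..<m} \<and> card S = k \<and> mat_rank (col_submatrix ?X S) = n"
  have "((real m + \<alpha>\<^sup>2) / (real k + \<alpha>\<^sup>2) - 1) * (spec_norm (pinv ?X))\<^sup>2 \<le> 1 / real (k + 1 - n)"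
    using assms spec_norm_pinv_lower_bound_witness_le by (intro selection_factor_bound) auto
  also have "\<dots> \<le> (spec_norm (pinv (col_submatrix ?X S)))\<^sup>2"
    using spec_norm_pinv_lower_bound_witness_selection_ge[of S m n] S assms by auto
  finally show "((real m + \<alpha>\<^sup>2) / (real k + \<alpha>\<^sup>2) - 1) * (spec_norm (pinv ?X))\<^sup>2
      \<le> (spec_norm (pinv (col_submatrix ?X S)))\<^sup>2" .
qed

end
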